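(* Let $G=\langle X\rangle$ be a group, let $a,b\in G$ be elements of infinite order which are not proper powers in $G$, and let $H=\langle G,t\mid t^{-1}at=b\rangle$ be the HNN-extension of $G$ associated to the isomorphism $\langle a\rangle\to\langle b\rangle$, $a\mapsto b$. Then for every $g_0\in G$, if $g_0$ is not a proper power in $G$, then its image in $H$ is not a proper power in $H$.
   Context: An element $g$ of a group $K$ is a proper power in $K$ if $g=h^k$ for some $h\in K$ and some integer $k\ge2$. *)

theory Defs
  imports "HOL-Algebra.Algebra"
begin

definition proper_power :: "('g, 'm) monoid_scheme \<Rightarrow> 'g \<Rightarrow> bool" where
  "proper_power K g \<longleftrightarrow> (\<exists>h \<in> carrier K. \<exists>k::int. k \<ge> 2 \<and> g = h [^]\<^bsub>K\<^esub> k)"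

text \<open>Words are lists over letters Inl g (g in G), Inr True (= t), Inr False (= t^-1).\<close>
inductive hnn_rel :: "('g, 'm) monoid_scheme \<Rightarrow> 'g \<Rightarrow> 'g \<Rightarrow> ('g + bool) list \<Rightarrow> ('g + bool) list \<Rightarrow> bool"
  for G a b where
  mult_rel: "x \<in> carrier G \<Longrightarrow> y \<in> carrier G \<Longrightarrow> hnn_rel G a b [Inl x, Inl y] [Inl (x \<otimes>\<^bsub>G\<^esub> y)]"
| one_rel: "hnn_rel G a b [Inl \<one>\<^bsub>G\<^esub>] []"
| t_tinv: "hnn_rel G a b [Inr True, Inr False] []"
| tinv_t: "hnn_rel G a b [Inr False, Inr True] []"
| conj_rel: "hnn_rel G a b [Inr False, Inl a, Inr True] [Inl b]"
| refl: "hnn_rel G a b w w"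
| sym: "hnn_rel G a b u v \<Longrightarrow> hnn_rel G a b v u"
| trans: "hnn_rel G a b u v \<Longrightarrow> hnn_rel G a b v w \<Longrightarrow> hnn_rel G a b u w"
| ctxt: "hnn_rel G a b u v \<Longrightarrow> hnn_rel G a b (p @ u @ q) (p @ v @ q)"

definition hnn_words :: "('g, 'm) monoid_scheme \<Rightarrow> ('g + bool) list set" where
  "hnn_words G = {w. \<forall>x \<in> set w. case x of Inl g \<Rightarrow> g \<in> carrier G | Inr _ \<Rightarrow> True}"

definition hnn_class :: "('g, 'm) monoid_scheme \<Rightarrow> 'g \<Rightarrow> 'g \<Rightarrow> ('g + bool) list \<Rightarrow> ('g + bool) list set" where
  "hnn_class G a b w = {v. hnn_rel G a b w v}"

definition hnn_ext :: "('g, 'm) monoid_scheme \<Rightarrow> 'g \<Rightarrow> 'g \<Rightarrow> ('g + bool) list set monoid" where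
  "hnn_ext G a b =
     \<lparr> partial_object.carrier = hnn_class G a b ` hnn_words G,
       monoid.mult = (\<lambda>U V. {w. \<exists>u. u \<in> U \<and> (\<exists>v. v \<in> V \<and> hnn_rel G a b (u @ v) w)}),
       monoid.one = hnn_class G a b [] \<rparr>"

definition hnn_inc :: "('g, 'm) monoid_scheme \<Rightarrow> 'g \<Rightarrow> 'g \<Rightarrow> 'g \<Rightarrow> ('g + bool) list set" where
  "hnn_inc G a b g = hnn_class G a b [Inl g]"

end

theory Submission
  imports Defs
begin

text \<open>Words in \<open>G\<close> and \<open>t\<^sup>\<plusminus>\<^sup>1\<close> act on Britton normal forms (van der Waerden's trick), so the
  number of stable letters of a reduced word is an invariant of the element it represents.
  Suppose \<open>g\<^sub>0 = w\<^sup>k\<close> with \<open>k \<ge> 2\<close>; more generally, suppose \<open>w\<^sup>k\<close> is conjugate in \<open>H\<close> to some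
  \<open>y \<in> G\<close> that is not a proper power of \<open>G\<close>, and induct on the number of stable letters of \<open>w\<close>.
  After cancelling pinches, \<open>w\<close> is reduced. If \<open>w \<in> G\<close>, then \<open>w\<^sup>k\<close> and \<open>y\<close> are elements of
  \<open>G\<close> conjugate in \<open>H\<close>; but such a conjugation only ever passes through the cyclic
  subgroups \<open>\<langle>a\<rangle>\<close> and \<open>\<langle>b\<rangle>\<close>, turning \<open>a\<^sup>\<plusminus>\<^sup>1\<close> into \<open>b\<^sup>\<plusminus>\<^sup>1\<close> and back, so it
  preserves not being a proper power, as \<open>a\<close> and \<open>b\<close> are not proper powers. If \<open>w\<close> is
  cyclically reduced and contains \<open>t\<close>, the normal forms of its powers grow linearly, which
  is impossible for conjugates of elements of \<open>G\<close>. Otherwise a cyclic conjugate of \<open>w\<close>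
  has fewer stable letters.\<close>

fun syls_word :: "(bool \<times> 'g) list \<Rightarrow> ('g + bool) list" where
  "syls_word [] = []"
| "syls_word ((e, g) # L) = Inr e # Inl g # syls_word L"

definition form_word :: "'g \<times> (bool \<times> 'g) list \<Rightarrow> ('g + bool) list" where
  "form_word h = Inl (fst h) # syls_word (snd h)"

fun t_count :: "('g + bool) list \<Rightarrow> nat" where
  "t_count [] = 0"
| "t_count (Inl _ # w) = t_count w"
| "t_count (Inr _ # w) = Suc (t_count w)"

lemma t_count_append [simp]: "t_count (u @ v) = t_count u + t_count v"
  by (induction u rule: t_count.induct) auto

lemma t_count_syls_word [simp]: "t_count (syls_word L) = length L"
  by (induction L) auto

lemma syls_word_append [simp]: "syls_word (L @ M) = syls_word L @ syls_word M"
  by (induction L) auto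

definition word_pow :: "('g + bool) list \<Rightarrow> nat \<Rightarrow> ('g + bool) list" where
  "word_pow w n = concat (replicate n w)"

lemma word_pow_0 [simp]: "word_pow w 0 = []"
  by (simp add: word_pow_def)

lemma word_pow_Suc: "word_pow w (Suc n) = w @ word_pow w n"
  by (simp add: word_pow_def)

lemma word_pow_Suc_right: "word_pow w (Suc n) = word_pow w n @ w"
  by (simp add: word_pow_def replicate_append_same[symmetric])

lemma word_pow_add: "word_pow w (i + j) = word_pow w i @ word_pow w j"
  by (simp add: word_pow_def replicate_add)

lemma word_pow_mult: "word_pow w (k * m) = word_pow (word_pow w k) m"
  by (induction m) (simp_all add: word_pow_add word_pow_Suc)

fun letter_inv :: "('g, 'm) monoid_scheme \<Rightarrow> 'g + bool \<Rightarrow> 'g + bool" where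
  "letter_inv G (Inl g) = Inl (inv\<^bsub>G\<^esub> g)"
| "letter_inv G (Inr e) = Inr (\<not> e)"

fun word_inv :: "('g, 'm) monoid_scheme \<Rightarrow> ('g + bool) list \<Rightarrow> ('g + bool) list" where
  "word_inv G [] = []"
| "word_inv G (x # w) = word_inv G w @ [letter_inv G x]"

lemma t_count_word_inv [simp]: "t_count (word_inv G w) = t_count w"
proof (induction w)
  case (Cons x w) then show ?case by (cases x) auto
qed simp

lemma hnn_words_append [simp]:
  "u @ v \<in> hnn_words G \<longleftrightarrow> u \<in> hnn_words G \<and> v \<in> hnn_words G"
  by (auto simp: hnn_words_def)

lemma hnn_words_Cons [simp]:
  "x # v \<in> hnn_words G \<longleftrightarrow> (case x of Inl g \<Rightarrow> g \<in> carrier G | Inr _ \<Rightarrow> True) \<and> v \<in> hnn_words G"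
  by (auto simp: hnn_words_def)

lemma hnn_words_Nil [simp]: "[] \<in> hnn_words G"
  by (auto simp: hnn_words_def)

declare hnn_rel.trans [trans] and hnn_rel.refl [iff]

lemma hnn_rel_append:
  assumes "hnn_rel G a b u u'" and "hnn_rel G a b v v'"
  shows "hnn_rel G a b (u @ v) (u' @ v')"
proof -
  have "hnn_rel G a b (u @ v) (u' @ v)" using hnn_rel.ctxt[OF assms(1), of "[]" v] by simp
  also have "hnn_rel G a b (u' @ v) (u' @ v')" using hnn_rel.ctxt[OF assms(2), of u' "[]"] by simp
  finally show ?thesis .
qed

lemma hnn_rel_word_pow_conj:
  assumes "hnn_rel G a b (V @ U) []" and "hnn_rel G a b (U @ V) []"
    and "hnn_rel G a b w (U @ w' @ V)"
  shows "hnn_rel G a b (word_pow w k) (U @ word_pow w' k @ V)"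
proof (induction k)
  case 0 then show ?case using hnn_rel.sym[OF assms(2)] by simp
next
  case (Suc k)
  have "hnn_rel G a b (word_pow w (Suc k)) ((U @ w') @ (V @ U) @ (word_pow w' k @ V))"
    using hnn_rel_append[OF assms(3) Suc] by (simp add: word_pow_Suc)
  also have "hnn_rel G a b ... ((U @ w') @ [] @ (word_pow w' k @ V))"
    by (rule hnn_rel.ctxt[OF assms(1)])
  finally show ?case by (simp add: word_pow_Suc)
qed

section \<open>Proper powers and cyclic cosets in a group\<close>

context group
begin

lemma proper_power_nat_pow: "h \<in> carrier G \<Longrightarrow> 2 \<le> n \<Longrightarrow> proper_power G (h [^] (n::nat))"
  unfolding proper_power_def by (metis int_pow_int of_nat_le_iff of_nat_numeral)

lemma proper_power_inv: "proper_power G y \<Longrightarrow> proper_power G (inv y)"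
  unfolding proper_power_def by (metis int_pow_inv inv_closed)

lemma conj_nat_pow:
  assumes "x \<in> carrier G" and "h \<in> carrier G"
  shows "(x \<otimes> h \<otimes> inv x) [^] (n::nat) = x \<otimes> h [^] n \<otimes> inv x"
proof (induction n)
  case (Suc n)
  have "(x \<otimes> h [^] n \<otimes> inv x) \<otimes> (x \<otimes> h \<otimes> inv x) = x \<otimes> h [^] n \<otimes> (inv x \<otimes> x) \<otimes> h \<otimes> inv x"
    using assms by (simp add: m_assoc del: l_inv Units_l_inv)
  also have "\<dots> = x \<otimes> (h [^] n \<otimes> h) \<otimes> inv x"
    using assms by (simp add: m_assoc)
  finally show ?case using Suc by simp
qed (use assms in simp)

lemma proper_power_conj:
  assumes "proper_power G y" and "x \<in> carrier G"
  shows "proper_power G (x \<otimes> y \<otimes> inv x)"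
proof -
  obtain h k where h: "h \<in> carrier G" "(k::int) \<ge> 2" "y = h [^] nat k"
    using assms(1) unfolding proper_power_def by (metis int_pow_int int_nat_eq order_trans zero_le_numeral)
  then have "x \<otimes> y \<otimes> inv x = (x \<otimes> h \<otimes> inv x) [^] nat k"
    using conj_nat_pow[OF assms(2) h(1)] by simp
  then show ?thesis
    using h assms(2) proper_power_nat_pow[of "x \<otimes> h \<otimes> inv x" "nat k"] by simp
qed

lemma non_proper_power_zpow:
  assumes c: "c \<in> carrier G" and np: "\<not> proper_power G (c [^] (m::int))"
  shows "m = 1 \<or> m = -1"
proof (rule ccontr)
  assume "\<not> (m = 1 \<or> m = -1)"
  then consider "m = 0" | "m \<ge> 2" | "m \<le> -2" by linarith
  then show False
  proof cases
    case 1
    then have "c [^] m = \<one> [^] (2::int)" by simp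
    then show False using np unfolding proper_power_def by blast
  next
    case 2
    then show False using np c by (auto simp: proper_power_def)
  next
    case 3
    have "c [^] m = inv c [^] (- m)" using c by (simp add: int_pow_inv int_pow_neg[symmetric])
    then have "proper_power G (c [^] m)"
      unfolding proper_power_def using c 3 by (intro bexI[of _ "inv c"] exI[of _ "- m"]) auto
    then show False using np by blast
  qed
qed

lemma subgroup_mult_cancel_right:
  assumes "subgroup H G" and "x \<in> H" and "g \<in> carrier G" and "g \<otimes> x \<in> H"
  shows "g \<in> H"
proof -
  have "g = (g \<otimes> x) \<otimes> inv x"
    using assms by (simp add: m_assoc subgroup.mem_carrier)
  then show ?thesis using assms by (metis subgroup.m_closed subgroup.m_inv_closed)
qed

text \<open>The subgroup itself is represented by \<open>\<one>\<close>; normal forms rely on this to detect pinches.\<close>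

definition coset_rep :: "'a set \<Rightarrow> 'a" where
  "coset_rep C = (if \<one> \<in> C then \<one> else (SOME r. r \<in> C))"

lemma coset_rep_in: "subgroup H G \<Longrightarrow> g \<in> carrier G \<Longrightarrow> coset_rep (H #> g) \<in> H #> g"
  unfolding coset_rep_def by (auto intro: someI rcos_self)

lemma rcos_mult_left:
  assumes "subgroup H G" and "h \<in> H" and "g \<in> carrier G"
  shows "H #> (h \<otimes> g) = H #> g"
proof -
  have "H #> (h \<otimes> g) = (H #> h) #> g"
    using assms by (simp add: coset_mult_assoc subgroup.subset subgroup.mem_carrier)
  then show ?thesis using assms by (simp add: subgroup.rcos_const)
qed

abbreviation zpowers :: "'a \<Rightarrow> 'a set" where
  "zpowers c \<equiv> range (\<lambda>m::int. c [^] m)"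

definition crep :: "'a \<Rightarrow> 'a \<Rightarrow> 'a" where
  "crep c g = coset_rep (zpowers c #> g)"

definition cexp :: "'a \<Rightarrow> 'a \<Rightarrow> int" where
  "cexp c g = (THE m. g = c [^] m \<otimes> crep c g)"

lemma crep_zpow_mult: "c \<in> carrier G \<Longrightarrow> g \<in> carrier G \<Longrightarrow> crep c (c [^] (m::int) \<otimes> g) = crep c g"
  unfolding crep_def by (simp add: rcos_mult_left subgroup_of_powers)

lemma crep_one: "crep c \<one> = \<one>"
proof -
  have "\<one> \<in> zpowers c #> \<one>"
    unfolding r_coset_def by (rule UN_I[of "c [^] (0::int)"], rule rangeI, simp)
  then show ?thesis by (simp add: crep_def coset_rep_def)
qed

lemma zpow_decomp:
  assumes "c \<in> carrier G" and "g \<in> carrier G"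
  obtains m :: int and r where "g = c [^] m \<otimes> r" and "r \<in> carrier G" and "crep c r = r"
proof -
  obtain k :: int where k: "crep c g = c [^] k \<otimes> g"
    using coset_rep_in[OF subgroup_of_powers[OF assms(1)] assms(2)]
    unfolding crep_def r_coset_def by auto
  then have "g = c [^] (- k) \<otimes> crep c g"
    using assms by (simp add: m_assoc[symmetric] int_pow_mult[symmetric])
  moreover have "crep c (crep c g) = crep c g" using k crep_zpow_mult assms by simp
  ultimately show ?thesis using that k assms by (metis int_pow_closed m_closed)
qed

lemma crep_cexp_zpow_mult:
  assumes c: "c \<in> carrier G" "ord c = 0" and r: "r \<in> carrier G" "crep c r = r"
  shows "crep c (c [^] (m::int) \<otimes> r) = r" and "cexp c (c [^] m \<otimes> r) = m"
proof -
  show rep: "crep c (c [^] m \<otimes> r) = r" using crep_zpow_mult[OF c(1) r(1)] r(2) by simp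
  have "\<And>n::int. c [^] m \<otimes> r = c [^] n \<otimes> r \<Longrightarrow> n = m"
    using c r by (simp add: int_pow_eq)
  then show "cexp c (c [^] m \<otimes> r) = m"
    unfolding cexp_def rep by (intro the_equality) auto
qed

end

locale hnn_setting = group G for G (structure) +
  fixes a b :: 'a
  assumes a_closed [simp]: "a \<in> carrier G" and b_closed [simp]: "b \<in> carrier G"
    and ord_a: "ord a = 0" and ord_b: "ord b = 0"
begin

abbreviation hnn_eq :: "('a + bool) list \<Rightarrow> ('a + bool) list \<Rightarrow> bool" (infix "\<asymp>" 50) where
  "u \<asymp> v \<equiv> hnn_rel G a b u v"

lemma hnn_eq_Cons: "v \<asymp> v' \<Longrightarrow> x # v \<asymp> x # v'"
  using hnn_rel.ctxt[of G a b v v' "[x]" "[]"] by simp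

lemma hnn_eq_merge:
  "x \<in> carrier G \<Longrightarrow> y \<in> carrier G \<Longrightarrow> p @ [Inl x, Inl y] @ q \<asymp> p @ [Inl (x \<otimes> y)] @ q"
  by (rule hnn_rel.ctxt[OF hnn_rel.mult_rel])

lemma hnn_eq_t_cancel: "[Inr e, Inr (\<not> e)] \<asymp> []"
  by (cases e) (auto intro: hnn_rel.t_tinv hnn_rel.tinv_t)

lemma hnn_eq_inv_cancel:
  assumes "g \<in> carrier G"
  shows "[Inl g, Inl (inv g)] \<asymp> []" and "[Inl (inv g), Inl g] \<asymp> []"
  using hnn_rel.mult_rel[of "g" G "inv g" a b] hnn_rel.mult_rel[of "inv g" G g a b] assms
  by (auto intro: hnn_rel.trans hnn_rel.one_rel)

lemma hnn_eq_letter_inv: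
  assumes "[x] \<in> hnn_words G"
  shows "[x, letter_inv G x] \<asymp> []" and "[letter_inv G x, x] \<asymp> []"
  using assms hnn_eq_t_cancel[of "\<not> _"] by (cases x; auto simp: hnn_eq_inv_cancel hnn_eq_t_cancel)+

lemma word_inv_hnn_words: "w \<in> hnn_words G \<Longrightarrow> word_inv G w \<in> hnn_words G"
  by (induction w) (auto split: sum.splits)

lemma hnn_eq_word_inv:
  "w \<in> hnn_words G \<Longrightarrow> w @ word_inv G w \<asymp> [] \<and> word_inv G w @ w \<asymp> []"
proof (induction w)
  case (Cons x w)
  then have w: "w \<in> hnn_words G" and x: "[x] \<in> hnn_words G"
    by (auto simp: hnn_words_def)
  have "[x] @ (w @ word_inv G w) @ [letter_inv G x] \<asymp> [x] @ [] @ [letter_inv G x]"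
    using Cons.IH w by (intro hnn_rel.ctxt) auto
  also have "\<dots> \<asymp> []" using hnn_eq_letter_inv(1)[OF x] by simp
  finally have right: "(x # w) @ word_inv G (x # w) \<asymp> []" by simp
  have "word_inv G w @ [letter_inv G x, x] @ w \<asymp> word_inv G w @ [] @ w"
    using hnn_eq_letter_inv(2)[OF x] by (rule hnn_rel.ctxt)
  also have "\<dots> \<asymp> []" using Cons.IH w by simp
  finally have left: "word_inv G (x # w) @ (x # w) \<asymp> []" by simp
  from left right show ?case by simp
qed simp

lemma hnn_eq_single_pow: "g \<in> carrier G \<Longrightarrow> word_pow [Inl g] n \<asymp> [Inl (g [^] n)]"
proof (induction n)
  case 0 then show ?case using hnn_rel.sym[OF hnn_rel.one_rel] by simp
next
  case (Suc n)
  have "word_pow [Inl g] (Suc n) \<asymp> [Inl (g [^] n)] @ [Inl g]"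
    unfolding word_pow_Suc_right by (rule hnn_rel_append[OF Suc.IH[OF Suc.prems] hnn_rel.refl])
  also have "\<dots> \<asymp> [Inl (g [^] Suc n)]" using hnn_rel.mult_rel[of "g [^] n" G g] Suc.prems by simp
  finally show ?case .
qed

definition syls_closed :: "(bool \<times> 'a) list \<Rightarrow> bool" where
  "syls_closed L \<longleftrightarrow> snd ` set L \<subseteq> carrier G"

lemma syls_closed_simps [simp]:
  "syls_closed []"
  "syls_closed (x # L) \<longleftrightarrow> snd x \<in> carrier G \<and> syls_closed L"
  "syls_closed (L @ M) \<longleftrightarrow> syls_closed L \<and> syls_closed M"
  by (auto simp: syls_closed_def)

fun syllables :: "('a + bool) list \<Rightarrow> 'a \<times> (bool \<times> 'a) list" where
  "syllables [] = (\<one>, [])"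
| "syllables (Inl g # w) = (g \<otimes> fst (syllables w), snd (syllables w))"
| "syllables (Inr e # w) = (\<one>, (e, fst (syllables w)) # snd (syllables w))"

lemma hnn_eq_syllables:
  "w \<in> hnn_words G \<Longrightarrow>
     w \<asymp> form_word (syllables w) \<and> fst (syllables w) \<in> carrier G \<and> syls_closed (snd (syllables w))"
proof (induction w rule: syllables.induct)
  case 1 then show ?case using hnn_rel.sym[OF hnn_rel.one_rel] by (simp add: form_word_def)
next
  case (2 g w)
  then have g: "g \<in> carrier G" and IH: "w \<asymp> form_word (syllables w)"
    "fst (syllables w) \<in> carrier G" "syls_closed (snd (syllables w))" by auto
  have "Inl g # w \<asymp> [] @ [Inl g, Inl (fst (syllables w))] @ syls_word (snd (syllables w))"
    using hnn_eq_Cons[OF IH(1)] by (simp add: form_word_def)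
  also have "\<dots> \<asymp> [] @ [Inl (g \<otimes> fst (syllables w))] @ syls_word (snd (syllables w))"
    using g IH(2) by (rule hnn_eq_merge)
  finally show ?case using IH g by (simp add: form_word_def)
next
  case (3 e w)
  then have IH: "w \<asymp> form_word (syllables w)"
    "fst (syllables w) \<in> carrier G" "syls_closed (snd (syllables w))" by auto
  have "Inr e # w \<asymp> [] @ [] @ Inr e # form_word (syllables w)" using hnn_eq_Cons[OF IH(1)] by simp
  also have "\<dots> \<asymp> [] @ [Inl \<one>] @ Inr e # form_word (syllables w)"
    by (intro hnn_rel.ctxt hnn_rel.sym[OF hnn_rel.one_rel])
  finally show ?case using IH by (simp add: form_word_def)
qed

text \<open>The defining relation of the HNN extension says \<open>t\<^sup>e \<cdot> rgen e = lgen e \<cdot> t\<^sup>e\<close>,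
  where \<open>t\<^sup>e\<close> is the letter \<open>Inr e\<close>; so \<open>rgen e\<close> generates the subgroup that
  a pinch \<open>t\<^sup>e g t\<^sup>-\<^sup>e\<close> removes.\<close>

definition rgen :: "bool \<Rightarrow> 'a" where "rgen e = (if e then b else a)"
definition lgen :: "bool \<Rightarrow> 'a" where "lgen e = (if e then a else b)"

lemma rgen_closed [simp]: "rgen e \<in> carrier G" and lgen_closed [simp]: "lgen e \<in> carrier G"
  by (auto simp: rgen_def lgen_def)

lemma rgen_not [simp]: "rgen (\<not> e) = lgen e" and lgen_not [simp]: "lgen (\<not> e) = rgen e"
  by (auto simp: rgen_def lgen_def)

lemma ord_rgen: "ord (rgen e) = 0"
  using ord_a ord_b by (simp add: rgen_def)

lemma hnn_eq_conj_inv: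
  assumes VU: "V @ U \<asymp> []" and UV: "U @ V \<asymp> []"
    and cd: "[Inl d] \<asymp> U @ [Inl c] @ V" and c: "c \<in> carrier G" and d: "d \<in> carrier G"
  shows "[Inl (inv d)] \<asymp> U @ [Inl (inv c)] @ V"
proof -
  have "U @ [Inl c] @ V @ U @ [Inl (inv c)] @ V \<asymp> (U @ [Inl c]) @ [] @ ([Inl (inv c)] @ V)"
    using hnn_rel.ctxt[OF VU, of "U @ [Inl c]" "[Inl (inv c)] @ V"] by simp
  also have "\<dots> \<asymp> U @ [] @ V" using hnn_rel.ctxt[OF hnn_eq_inv_cancel(1)[OF c], of U V] by simp
  also have "\<dots> \<asymp> []" using UV by simp
  finally have cancel: "U @ [Inl c] @ V @ U @ [Inl (inv c)] @ V \<asymp> []" .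
  have "[Inl (inv d)] \<asymp> [Inl (inv d)] @ (U @ [Inl c] @ V @ U @ [Inl (inv c)] @ V) @ []"
    using hnn_rel.ctxt[OF hnn_rel.sym[OF cancel], of "[Inl (inv d)]" "[]"] by simp
  also have "\<dots> \<asymp> [Inl (inv d)] @ [Inl d] @ (U @ [Inl (inv c)] @ V)"
    using hnn_rel.ctxt[OF hnn_rel.sym[OF cd], of "[Inl (inv d)]" "U @ [Inl (inv c)] @ V"] by simp
  also have "\<dots> \<asymp> [] @ [] @ (U @ [Inl (inv c)] @ V)"
    using hnn_rel.ctxt[OF hnn_eq_inv_cancel(2)[OF d], of "[]" "U @ [Inl (inv c)] @ V"] by simp
  finally show ?thesis by simp
qed

lemma hnn_eq_conj_zpow:
  assumes VU: "V @ U \<asymp> []" and UV: "U @ V \<asymp> []"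
    and cd: "[Inl d] \<asymp> U @ [Inl c] @ V" and c: "c \<in> carrier G" and d: "d \<in> carrier G"
  shows "[Inl (d [^] (m::int))] \<asymp> U @ [Inl (c [^] m)] @ V"
proof -
  have nat_pow: "[Inl (d' [^] n)] \<asymp> U @ [Inl (c' [^] n)] @ V"
    if cd': "[Inl d'] \<asymp> U @ [Inl c'] @ V" and "c' \<in> carrier G" "d' \<in> carrier G" for c' d' and n :: nat
  proof -
    have "[Inl (d' [^] n)] \<asymp> word_pow [Inl d'] n"
      using hnn_rel.sym[OF hnn_eq_single_pow] that by blast
    also have "\<dots> \<asymp> U @ word_pow [Inl c'] n @ V" by (rule hnn_rel_word_pow_conj[OF VU UV cd'])
    also have "\<dots> \<asymp> U @ [Inl (c' [^] n)] @ V" by (rule hnn_rel.ctxt[OF hnn_eq_single_pow]) fact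
    finally show ?thesis .
  qed
  show ?thesis
  proof (cases "m \<ge> 0")
    case True
    then show ?thesis using nat_pow[OF cd c d, of "nat m"] by simp
  next
    case False
    have "[Inl (inv d [^] nat (- m))] \<asymp> U @ [Inl (inv c [^] nat (- m))] @ V"
      using nat_pow[OF hnn_eq_conj_inv[OF VU UV cd c d]] c d by simp
    then show ?thesis using False c d
      by (metis int_pow_inv int_pow_neg int_pow_int minus_minus nat_0_le neg_0_le_iff_le nle_le)
  qed
qed

lemma hnn_eq_gen_conj: "[Inl (lgen e)] \<asymp> [Inr e, Inl (rgen e), Inr (\<not> e)]"
proof (cases e)
  case True
  have "[Inl a] \<asymp> [Inr True, Inr False] @ [Inl a]"
    using hnn_rel_append[OF hnn_rel.sym[OF hnn_eq_t_cancel[of True]] hnn_rel.refl[of G a b "[Inl a]"]]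
    by simp
  also have "\<dots> \<asymp> ([Inr True, Inr False] @ [Inl a]) @ [Inr True, Inr False]"
    using hnn_rel_append[OF hnn_rel.refl[of G a b "[Inr True, Inr False] @ [Inl a]"]
        hnn_rel.sym[OF hnn_eq_t_cancel[of True]]] by simp
  also have "\<dots> = [Inr True] @ [Inr False, Inl a, Inr True] @ [Inr False]" by simp
  also have "\<dots> \<asymp> [Inr True] @ [Inl b] @ [Inr False]" by (rule hnn_rel.ctxt[OF hnn_rel.conj_rel])
  finally show ?thesis using True by (simp add: rgen_def lgen_def)
next
  case False
  then show ?thesis using hnn_rel.sym[OF hnn_rel.conj_rel] by (simp add: rgen_def lgen_def)
qed

lemma hnn_eq_pinch: "[Inr e, Inl (rgen e [^] (m::int)), Inr (\<not> e)] \<asymp> [Inl (lgen e [^] m)]"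
proof -
  have "[Inl (lgen e [^] m)] \<asymp> [Inr e] @ [Inl (rgen e [^] m)] @ [Inr (\<not> e)]"
    using hnn_eq_t_cancel[of "\<not> e"] hnn_eq_t_cancel[of e] hnn_eq_gen_conj[of e]
    by (intro hnn_eq_conj_zpow) simp_all
  then show ?thesis by (simp add: hnn_rel.sym[of G a b "[Inl (lgen e [^] m)]"])
qed

section \<open>Normal forms and the action of words\<close>

text \<open>A normal form \<open>(g, [(e\<^sub>1, r\<^sub>1), \<dots>, (e\<^sub>n, r\<^sub>n)])\<close> stands for
  \<open>g t\<^sup>e\<^sup>1 r\<^sub>1 \<dots> t\<^sup>e\<^sup>n r\<^sub>n\<close>, each \<open>r\<^sub>i\<close> being the chosen representative of its coset of
  \<open>\<langle>rgen e\<^sub>i\<rangle>\<close> and no \<open>t\<^sup>e 1 t\<^sup>-\<^sup>e\<close> occurring. Words act on normal forms by left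
  multiplication; \<open>act_t e\<close> writes the \<open>G\<close>-part as \<open>rgen e\<^sup>m r\<close> and moves \<open>rgen e\<^sup>m\<close>
  across \<open>t\<^sup>e\<close>.\<close>

fun nf_syls :: "(bool \<times> 'a) list \<Rightarrow> bool" where
  "nf_syls [] = True"
| "nf_syls ((e, r) # s) \<longleftrightarrow> r \<in> carrier G \<and> crep (rgen e) r = r \<and> nf_syls s
     \<and> (r = \<one> \<longrightarrow> s = [] \<or> fst (hd s) = e)"

definition NF :: "('a \<times> (bool \<times> 'a) list) set" where
  "NF = {w. fst w \<in> carrier G \<and> nf_syls (snd w)}"

definition act_t :: "bool \<Rightarrow> 'a \<times> (bool \<times> 'a) list \<Rightarrow> 'a \<times> (bool \<times> 'a) list" where
  "act_t e w = (let r = crep (rgen e) (fst w); m = cexp (rgen e) (fst w); s = snd w in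
     if r = \<one> \<and> s \<noteq> [] \<and> fst (hd s) = (\<not> e) then (lgen e [^] m \<otimes> snd (hd s), tl s)
     else (lgen e [^] m, (e, r) # s))"

fun act_letter :: "'a + bool \<Rightarrow> 'a \<times> (bool \<times> 'a) list \<Rightarrow> 'a \<times> (bool \<times> 'a) list" where
  "act_letter (Inl g) w = (if g \<in> carrier G then (g \<otimes> fst w, snd w) else w)"
| "act_letter (Inr e) w = act_t e w"

definition act_word :: "('a + bool) list \<Rightarrow> 'a \<times> (bool \<times> 'a) list \<Rightarrow> 'a \<times> (bool \<times> 'a) list" where
  "act_word u w = foldr act_letter u w"

lemma act_word_Nil [simp]: "act_word [] w = w"
  and act_word_Cons [simp]: "act_word (x # u) w = act_letter x (act_word u w)"
  and act_word_append [simp]: "act_word (u @ v) w = act_word u (act_word v w)"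
  by (simp_all add: act_word_def)

lemma act_t_decomp:
  assumes "g = rgen e [^] (m::int) \<otimes> r" and "r \<in> carrier G" and "crep (rgen e) r = r"
  shows "act_t e (g, s) = (if r = \<one> \<and> s \<noteq> [] \<and> fst (hd s) = (\<not> e)
            then (lgen e [^] m \<otimes> snd (hd s), tl s) else (lgen e [^] m, (e, r) # s))"
proof -
  have "crep (rgen e) g = r" and "cexp (rgen e) g = m"
    using crep_cexp_zpow_mult[OF rgen_closed ord_rgen assms(2,3)] assms(1) by simp_all
  then show ?thesis unfolding act_t_def Let_def by simp
qed

lemma rgen_decomp:
  assumes "g \<in> carrier G"
  obtains m :: int and r where "g = rgen e [^] m \<otimes> r" and "r \<in> carrier G" and "crep (rgen e) r = r"
  using zpow_decomp[OF rgen_closed assms] by blast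

lemma act_t_NF:
  assumes "w \<in> NF" shows "act_t e w \<in> NF"
proof -
  obtain g s where w: "w = (g, s)" by (cases w)
  have g: "g \<in> carrier G" and s: "nf_syls s" using assms w by (auto simp: NF_def)
  obtain m r where d: "g = rgen e [^] (m::int) \<otimes> r" "r \<in> carrier G" "crep (rgen e) r = r"
    using rgen_decomp[OF g] by blast
  show ?thesis
  proof (cases "r = \<one> \<and> s \<noteq> [] \<and> fst (hd s) = (\<not> e)")
    case True
    then obtain r' s' where "s = (\<not> e, r') # s'" by (cases s) auto
    then show ?thesis using True s unfolding w act_t_decomp[OF d] by (simp add: NF_def)
  next
    case False
    then show ?thesis using s d unfolding w act_t_decomp[OF d] by (auto simp: NF_def)
  qed
qed

lemma act_t_inverse:
  assumes "w \<in> NF" shows "act_t (\<not> e) (act_t e w) = w"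
proof -
  obtain g s where w: "w = (g, s)" by (cases w)
  have g: "g \<in> carrier G" and s: "nf_syls s" using assms w by (auto simp: NF_def)
  obtain m r where d: "g = rgen e [^] (m::int) \<otimes> r" "r \<in> carrier G" "crep (rgen e) r = r"
    using rgen_decomp[OF g] by blast
  show ?thesis
  proof (cases "r = \<one> \<and> s \<noteq> [] \<and> fst (hd s) = (\<not> e)")
    case True
    then obtain r1 s' where s1: "s = (\<not> e, r1) # s'" by (cases s) auto
    then have r1: "r1 \<in> carrier G" "crep (rgen (\<not> e)) r1 = r1"
      and no_pinch: "\<not> (r1 = \<one> \<and> s' \<noteq> [] \<and> fst (hd s') = (\<not> \<not> e))"
      using s by auto
    have step: "act_t e w = (rgen (\<not> e) [^] m \<otimes> r1, s')"
      unfolding w act_t_decomp[OF d] using True s1 by simp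
    show ?thesis
      unfolding step act_t_decomp[OF HOL.refl r1] if_not_P[OF no_pinch] using d w s1 True by simp
  next
    case False
    have step: "act_t e w = (rgen (\<not> e) [^] m \<otimes> \<one>, (e, r) # s)"
      unfolding w act_t_decomp[OF d] if_not_P[OF False] by simp
    show ?thesis
      unfolding step act_t_decomp[OF HOL.refl one_closed crep_one] using d w by simp
  qed
qed

lemma act_t_conj_rel:
  assumes "w \<in> NF"
  shows "act_t False (act_letter (Inl a) (act_t True w)) = act_letter (Inl b) w"
proof -
  obtain g s where w: "w = (g, s)" by (cases w)
  have g: "g \<in> carrier G" and s: "nf_syls s" using assms w by (auto simp: NF_def)
  obtain m r where d: "g = rgen True [^] (m::int) \<otimes> r" "r \<in> carrier G" "crep (rgen True) r = r"
    using rgen_decomp[OF g] by blast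
  have gens: "rgen True = b" "lgen True = a" "rgen False = a" "lgen False = b"
    by (auto simp: rgen_def lgen_def)
  have a_pow: "a \<otimes> (a [^] m \<otimes> x) = rgen False [^] (m + 1) \<otimes> x" if "x \<in> carrier G" for x
    using that by (simp add: gens m_assoc[symmetric] int_pow_mult add.commute[of m 1])
  have b_side: "act_letter (Inl b) w = (b [^] (m + 1) \<otimes> r, s)"
    using w d gens by (simp add: m_assoc[symmetric] int_pow_mult add.commute[of m 1])
  show ?thesis
  proof (cases "r = \<one> \<and> s \<noteq> [] \<and> fst (hd s) = (\<not> True)")
    case True
    then obtain r1 s' where s1: "s = (False, r1) # s'" by (cases s) auto
    then have r1: "r1 \<in> carrier G" "crep (rgen False) r1 = r1"
      and no_pinch: "\<not> (r1 = \<one> \<and> s' \<noteq> [] \<and> fst (hd s') = (\<not> False))"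
      using s by auto
    have step: "act_letter (Inl a) (act_t True w) = (rgen False [^] (m + 1) \<otimes> r1, s')"
      unfolding w act_t_decomp[OF d] using True s1 gens r1 a_pow by simp
    show ?thesis
      unfolding step act_t_decomp[OF HOL.refl r1] if_not_P[OF no_pinch] using b_side gens True s1 by simp
  next
    case False
    have step: "act_letter (Inl a) (act_t True w) = (rgen False [^] (m + 1) \<otimes> \<one>, (True, r) # s)"
      unfolding w act_t_decomp[OF d] if_not_P[OF False] using gens a_pow[of \<one>] by simp
    show ?thesis
      unfolding step act_t_decomp[OF HOL.refl one_closed crep_one] using b_side gens by simp
  qed
qed

lemma act_word_NF: "w \<in> NF \<Longrightarrow> act_word u w \<in> NF"
proof (induction u)
  case (Cons x u)
  then have "act_word u w \<in> NF" by simp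
  then show ?case by (cases x) (simp_all add: act_t_NF, auto simp: NF_def)
qed simp

lemma act_word_hnn_eq: "u \<asymp> v \<Longrightarrow> w \<in> NF \<Longrightarrow> act_word u w = act_word v w"
proof (induction arbitrary: w rule: hnn_rel.induct)
  case (mult_rel x y) then show ?case by (auto simp: m_assoc NF_def)
next
  case one_rel then show ?case by (auto simp: NF_def)
next
  case t_tinv then show ?case using act_t_inverse[of w False] by simp
next
  case tinv_t then show ?case using act_t_inverse[of w True] by simp
next
  case conj_rel then show ?case using act_t_conj_rel by simp
next
  case (ctxt u v p q) then show ?case using act_word_NF by simp
qed simp_all

lemma length_act_t:
  "length (snd (act_t e v)) \<le> Suc (length (snd v))"
  "length (snd v) \<le> Suc (length (snd (act_t e v)))"
  unfolding act_t_def Let_def by (cases "snd v"; simp)+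

lemma length_act_word:
  "length (snd (act_word u w)) \<le> length (snd w) + t_count u \<and>
   length (snd w) \<le> length (snd (act_word u w)) + t_count u"
proof (induction u)
  case (Cons x u)
  show ?case
  proof (cases x)
    case (Inr e)
    then show ?thesis using Cons length_act_t[where e = e and v = "act_word u w"] by simp
  qed (use Cons in simp)
qed simp

section \<open>Reduced forms\<close>

lemma syls_word_hnn_words [simp]: "syls_word L \<in> hnn_words G \<longleftrightarrow> syls_closed L"
  by (induction L) auto

lemma form_word_hnn_words [simp]: "form_word (g, L) \<in> hnn_words G \<longleftrightarrow> g \<in> carrier G \<and> syls_closed L"
  by (simp add: form_word_def)

lemma t_count_form_word [simp]: "t_count (form_word h) = length (snd h)"
  by (simp add: form_word_def)

lemma hnn_eq_form:
  assumes "w \<in> hnn_words G"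
  obtains g L where "w \<asymp> form_word (g, L)" and "g \<in> carrier G" and "syls_closed L"
    and "length L = t_count w"
proof -
  have "length (snd (syllables w)) = t_count w"
    by (induction w rule: syllables.induct) auto
  then show ?thesis using that hnn_eq_syllables[OF assms] by (metis prod.collapse)
qed

text \<open>\<open>pinch e g e'\<close>: the subword \<open>t\<^sup>e g t\<^sup>e\<^sup>'\<close> is a pinch in Britton's sense.\<close>

definition pinch :: "bool \<Rightarrow> 'a \<Rightarrow> bool \<Rightarrow> bool" where
  "pinch e g e' \<longleftrightarrow> e' = (\<not> e) \<and> g \<in> zpowers (rgen e)"

fun reduced :: "(bool \<times> 'a) list \<Rightarrow> bool" where
  "reduced [] = True"
| "reduced [x] = True"
| "reduced ((e, g) # (e', g') # L) \<longleftrightarrow> \<not> pinch e g e' \<and> reduced ((e', g') # L)"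

definition cyc_reduced :: "'a \<times> (bool \<times> 'a) list \<Rightarrow> bool" where
  "cyc_reduced h \<longleftrightarrow> \<not> pinch (fst (last (snd h))) (snd (last (snd h)) \<otimes> fst h) (fst (hd (snd h)))"

lemma pinch_mult_right:
  assumes "pinch e (g \<otimes> c) e'" and "c \<in> zpowers (lgen e')" and "g \<in> carrier G"
  shows "pinch e g e'"
  using assms subgroup_mult_cancel_right[OF subgroup_of_powers[OF rgen_closed], of c e g]
  by (auto simp: pinch_def)

lemma act_t_no_pinch:
  assumes "g \<in> carrier G" and "s = [] \<or> \<not> pinch e g (fst (hd s))"
  obtains r where "act_t e (g, s) = (lgen e [^] cexp (rgen e) g, (e, r) # s)"
proof -
  obtain m r where d: "g = rgen e [^] (m::int) \<otimes> r" "r \<in> carrier G" "crep (rgen e) r = r"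
    using rgen_decomp[OF assms(1)] by blast
  have no_pinch: "\<not> (r = \<one> \<and> s \<noteq> [] \<and> fst (hd s) = (\<not> e))"
    using assms d by (auto simp: pinch_def)
  have "cexp (rgen e) g = m"
    using crep_cexp_zpow_mult(2)[OF rgen_closed ord_rgen d(2,3)] d(1) by simp
  then show ?thesis using that act_t_decomp[OF d, of s] no_pinch by simp
qed

text \<open>Acting by a reduced word pushes every one of its syllables onto the normal form:
  no cancellation can occur, since a cancellation would exhibit a pinch.\<close>

lemma act_reduced:
  assumes "reduced L" and "syls_closed L" and "L \<noteq> []" and "d \<in> carrier G"
    and "s = [] \<or> \<not> pinch (fst (last L)) (snd (last L) \<otimes> d) (fst (hd s))"
  shows "\<exists>c s'. act_word (syls_word L) (d, s) = (c, s') \<and> c \<in> zpowers (lgen (fst (hd L)))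
           \<and> s' \<noteq> [] \<and> fst (hd s') = fst (hd L) \<and> length s' = length L + length s"
  using assms
proof (induction L rule: reduced.induct)
  case (2 x)
  obtain e g where x: "x = (e, g)" by (cases x)
  obtain r where "act_t e (g \<otimes> d, s) = (lgen e [^] cexp (rgen e) (g \<otimes> d), (e, r) # s)"
    using act_t_no_pinch[of "g \<otimes> d" s e] 2 x by auto
  then show ?case using 2 x by auto
next
  case (3 e g e' g' L)
  then obtain c s' where IH: "act_word (syls_word ((e', g') # L)) (d, s) = (c, s')"
    "c \<in> zpowers (lgen e')" "s' \<noteq> []" "fst (hd s') = e'" "length s' = Suc (length L) + length s"
    by auto
  have g: "g \<in> carrier G" and c: "c \<in> carrier G" using 3 IH(2) by auto
  have "\<not> pinch e (g \<otimes> c) (fst (hd s'))"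
    using pinch_mult_right[of e g c e'] 3(2) IH g by auto
  then obtain r where "act_t e (g \<otimes> c, s') = (lgen e [^] cexp (rgen e) (g \<otimes> c), (e, r) # s')"
    using act_t_no_pinch[of "g \<otimes> c" s' e] g c by auto
  then show ?case using IH g by auto
qed simp

lemma act_pow_cyc_reduced:
  assumes "reduced L" and "syls_closed L" and "L \<noteq> []" and "g \<in> carrier G"
    and "cyc_reduced (g, L)"
  shows "length (snd (act_word (word_pow (form_word (g, L)) j) (\<one>, []))) = j * length L"
proof -
  let ?pinch_free = "\<lambda>(d, s). d \<in> carrier G \<and>
    (s = [] \<or> \<not> pinch (fst (last L)) (snd (last L) \<otimes> d) (fst (hd s)))"
  have "?pinch_free (act_word (word_pow (form_word (g, L)) j) (\<one>, []))
    \<and> length (snd (act_word (word_pow (form_word (g, L)) j) (\<one>, []))) = j * length L"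
  proof (induction j)
    case (Suc j)
    obtain d s where ds: "act_word (word_pow (form_word (g, L)) j) (\<one>, []) = (d, s)"
      by fastforce
    obtain c s' where c: "act_word (syls_word L) (d, s) = (c, s')"
      "c \<in> zpowers (lgen (fst (hd L)))" "s' \<noteq> []" "fst (hd s') = fst (hd L)"
      "length s' = length L + length s"
      using act_reduced[OF assms(1-3), of d s] Suc ds by auto
    have gl: "snd (last L) \<in> carrier G" using assms(2,3) by (auto simp: syls_closed_def)
    have "\<not> pinch (fst (last L)) (snd (last L) \<otimes> (g \<otimes> c)) (fst (hd s'))"
      using pinch_mult_right[of "fst (last L)" "snd (last L) \<otimes> g" c] assms(4,5) c gl
      by (auto simp: cyc_reduced_def m_assoc)
    moreover have "c \<in> carrier G" using c(2) by auto
    ultimately show ?case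
      using Suc ds c assms(4) by (simp add: word_pow_Suc form_word_def)
  qed simp
  then show ?thesis by simp
qed

lemma not_reduced_split:
  "\<not> reduced L \<Longrightarrow> \<exists>L1 e g e' g' L2. L = L1 @ (e, g) # (e', g') # L2 \<and> pinch e g e'"
proof (induction L rule: reduced.induct)
  case (3 e g e' g' L)
  show ?case
  proof (cases "pinch e g e'")
    case False
    then obtain L1 e1 g1 e1' g1' L2 where "(e', g') # L = L1 @ (e1, g1) # (e1', g1') # L2"
      "pinch e1 g1 e1'" using 3 by auto
    then show ?thesis by (metis append_Cons)
  qed (metis append_Nil)
qed simp_all

lemma hnn_eq_reduced_form:
  "w \<in> hnn_words G \<Longrightarrow> \<exists>g L. w \<asymp> form_word (g, L) \<and> g \<in> carrier G \<and> syls_closed L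
     \<and> reduced L \<and> length L \<le> t_count w"
proof (induction "t_count w" arbitrary: w rule: less_induct)
  case less
  obtain g L where form: "w \<asymp> form_word (g, L)" "g \<in> carrier G" "syls_closed L"
    "length L = t_count w"
    using hnn_eq_form[OF less.prems] by blast
  show ?case
  proof (cases "reduced L")
    case False
    then obtain L1 e h e' g' L2 where L: "L = L1 @ (e, h) # (e', g') # L2" and "pinch e h e'"
      using not_reduced_split by blast
    then obtain m where e': "e' = (\<not> e)" and h: "h = rgen e [^] (m::int)"
      by (auto simp: pinch_def)
    define w' where "w' = (Inl g # syls_word L1) @ [Inl (lgen e [^] m)] @ (Inl g' # syls_word L2)"
    have "form_word (g, L) = (Inl g # syls_word L1) @ [Inr e, Inl h, Inr e'] @ (Inl g' # syls_word L2)"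
      by (simp add: form_word_def L)
    also have "\<dots> \<asymp> w'" unfolding w'_def e' h by (rule hnn_rel.ctxt[OF hnn_eq_pinch])
    finally have "w \<asymp> w'" using form(1) by (rule hnn_rel.trans[rotated])
    moreover have "w' \<in> hnn_words G" "t_count w' < t_count w"
      using form L by (simp_all add: w'_def)
    ultimately show ?thesis using less.hyps[of w'] by (meson hnn_rel.trans le_less_trans less_imp_le)
  next
    case True
    then show ?thesis using form by (intro exI[of _ g] exI[of _ L]) simp
  qed
qed

section \<open>Conjugates of powers\<close>

lemma hnn_eq_cancel_left:
  assumes "V @ U \<asymp> []" and "u \<asymp> U @ v"
  shows "V @ u \<asymp> v"
proof -
  have "V @ u \<asymp> V @ (U @ v) @ []" using hnn_rel.ctxt[OF assms(2), of V "[]"] by simp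
  also have "\<dots> = [] @ (V @ U) @ v" by simp
  also have "\<dots> \<asymp> [] @ [] @ v" by (rule hnn_rel.ctxt[OF assms(1)])
  finally show ?thesis by simp
qed

lemma hnn_eq_conj_word_inv:
  assumes "x \<in> hnn_words G" and "u @ x \<asymp> x @ v"
  shows "v @ word_inv G x \<asymp> word_inv G x @ u"
proof -
  let ?W = "word_inv G x"
  have "?W @ u \<asymp> ?W @ u @ (x @ ?W)"
    using hnn_rel.ctxt[OF hnn_rel.sym[OF conjunct1[OF hnn_eq_word_inv[OF assms(1)]]], of "?W @ u" "[]"]
    by simp
  also have "\<dots> = ?W @ (u @ x) @ ?W" by simp
  also have "\<dots> \<asymp> ?W @ (x @ v) @ ?W" by (rule hnn_rel.ctxt[OF assms(2)])
  also have "\<dots> = [] @ (?W @ x) @ (v @ ?W)" by simp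
  also have "\<dots> \<asymp> [] @ [] @ (v @ ?W)"
    by (rule hnn_rel.ctxt[OF conjunct2[OF hnn_eq_word_inv[OF assms(1)]]])
  finally have "?W @ u \<asymp> v @ ?W" by simp
  then show ?thesis by (rule hnn_rel.sym)
qed

lemma hnn_eq_conj_pow:
  assumes "u @ x \<asymp> x @ [Inl y]" and "y \<in> carrier G"
  shows "word_pow u m @ x \<asymp> x @ [Inl (y [^] m)]"
proof (induction m)
  case 0
  show ?case using hnn_rel.sym[OF hnn_rel.ctxt[OF hnn_rel.one_rel, of G a b x "[]"]] by simp
next
  case (Suc m)
  have "word_pow u (Suc m) @ x \<asymp> u @ (x @ [Inl (y [^] m)])"
    using hnn_rel.ctxt[OF Suc, of u "[]"] by (simp add: word_pow_Suc)
  also have "\<dots> \<asymp> (x @ [Inl y]) @ [Inl (y [^] m)]"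
    using hnn_rel_append[OF assms(1) hnn_rel.refl] by simp
  also have "\<dots> \<asymp> x @ [Inl (y \<otimes> y [^] m)] @ []"
    using hnn_eq_merge[of y "y [^] m" x "[]"] assms(2) by simp
  also have "y \<otimes> y [^] m = y [^] Suc m" using assms(2) by (rule nat_pow_Suc2[symmetric])
  finally show ?case by simp
qed

text \<open>A cyclically reduced word with stable letters has powers of unbounded syllable length,
  whereas a conjugate \<open>x y\<^sup>m x\<^sup>-\<^sup>1\<close> of a power of an element of \<open>G\<close> acts with
  bounded length.\<close>

lemma cyc_reduced_not_conj_G:
  assumes L: "reduced L" "syls_closed L" "L \<noteq> []" and g: "g \<in> carrier G" "cyc_reduced (g, L)"
    and k: "1 \<le> k" and x: "x \<in> hnn_words G" and y: "y \<in> carrier G"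
  shows "\<not> word_pow (form_word (g, L)) k @ x \<asymp> x @ [Inl y]"
proof
  assume "word_pow (form_word (g, L)) k @ x \<asymp> x @ [Inl y]"
  define m where "m = Suc (2 * t_count x)"
  define v where "v = x @ [Inl (y [^] m)] @ word_inv G x"
  have pow_conj: "word_pow (form_word (g, L)) (k * m) @ x \<asymp> x @ [Inl (y [^] m)]"
    unfolding word_pow_mult by (rule hnn_eq_conj_pow) fact+
  have "word_pow (form_word (g, L)) (k * m) @ (x @ word_inv G x) \<asymp> v"
    unfolding v_def using hnn_rel_append[OF pow_conj hnn_rel.refl[of G a b "word_inv G x"]] by simp
  then have "act_word (word_pow (form_word (g, L)) (k * m) @ (x @ word_inv G x)) (\<one>, [])
      = act_word v (\<one>, [])"
    by (rule act_word_hnn_eq) (simp add: NF_def)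
  moreover have "act_word (x @ word_inv G x) (\<one>, []) = (\<one>, [])"
    using act_word_hnn_eq[OF conjunct1[OF hnn_eq_word_inv[OF x]], of "(\<one>, [])"]
    by (simp add: NF_def)
  ultimately have "act_word (word_pow (form_word (g, L)) (k * m)) (\<one>, []) = act_word v (\<one>, [])"
    by (simp only: act_word_append)
  then have "k * m * length L = length (snd (act_word v (\<one>, [])))"
    using act_pow_cyc_reduced[OF L g, of "k * m"] by simp
  also have "\<dots> \<le> t_count v" using length_act_word[of v "(\<one>, [])"] by simp
  also have "\<dots> = 2 * t_count x" by (simp add: v_def)
  finally have "k * m * length L < m" by (simp add: m_def)
  moreover have "m \<le> k * m * length L" using k L(3) by (simp add: Suc_le_eq)
  ultimately show False by simp
qed

lemma not_cyc_reduced_conj: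
  assumes L: "reduced L" "syls_closed L" "L \<noteq> []" and g: "g \<in> carrier G"
    and not_cyc: "\<not> cyc_reduced (g, L)"
  obtains U w' where "U \<in> hnn_words G" and "w' \<in> hnn_words G" and "t_count w' < length L"
    and "form_word (g, L) \<asymp> U @ w' @ word_inv G U"
proof -
  obtain en gn where last: "last L = (en, gn)" by fastforce
  obtain e1 g1 L' where L1: "L = (e1, g1) # L'" using L(3) by (cases L) auto
  have "pinch en (gn \<otimes> g) e1" using not_cyc last L1 by (simp add: cyc_reduced_def)
  then obtain m where e1: "e1 = (\<not> en)" and m: "gn \<otimes> g = rgen en [^] (m::int)"
    by (auto simp: pinch_def)
  then have "L' \<noteq> []" using last L1 by auto
  then obtain M where M: "L' = M @ [(en, gn)]" using last L1 by (cases L' rule: rev_cases) auto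
  have g1: "g1 \<in> carrier G" and gn: "gn \<in> carrier G" and M_closed: "syls_closed M"
    using L(2) L1 M by auto
  define U where "U = [Inl g, Inr e1]"
  define w' where "w' = form_word (g1, M) @ [Inl (lgen en [^] m)]"
  have U_cancel: "U @ word_inv G U \<asymp> []" using hnn_eq_word_inv[of U] g by (simp add: U_def)
  have "form_word (g, L) = (U @ form_word (g1, M) @ [Inr en, Inl gn]) @ [] @ []"
    by (simp add: U_def form_word_def L1 M)
  also have "\<dots> \<asymp> (U @ form_word (g1, M) @ [Inr en, Inl gn]) @ (U @ word_inv G U) @ []"
    by (rule hnn_rel.ctxt[OF hnn_rel.sym[OF U_cancel]])
  also have "\<dots> = (U @ form_word (g1, M) @ [Inr en]) @ [Inl gn, Inl g] @ (Inr e1 # word_inv G U)"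
    by (simp add: U_def)
  also have "\<dots> \<asymp> (U @ form_word (g1, M) @ [Inr en]) @ [Inl (gn \<otimes> g)] @ (Inr e1 # word_inv G U)"
    by (rule hnn_eq_merge[OF gn g])
  also have "\<dots> = (U @ form_word (g1, M)) @ [Inr en, Inl (rgen en [^] m), Inr (\<not> en)] @ word_inv G U"
    by (simp add: m e1)
  also have "\<dots> \<asymp> (U @ form_word (g1, M)) @ [Inl (lgen en [^] m)] @ word_inv G U"
    by (rule hnn_rel.ctxt[OF hnn_eq_pinch])
  finally have "form_word (g, L) \<asymp> U @ w' @ word_inv G U" by (simp add: w'_def)
  moreover have "U \<in> hnn_words G" "w' \<in> hnn_words G" "t_count w' < length L"
    using g g1 M_closed by (simp_all add: U_def w'_def L1 M)
  ultimately show ?thesis using that by blast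
qed

lemma reduced_t_count_le:
  assumes "reduced L" and "syls_closed L" and "syls_word L \<asymp> w"
  shows "length L \<le> t_count w"
proof (cases "L = []")
  case False
  obtain c s where "act_word (syls_word L) (\<one>, []) = (c, s)" and "length s = length L"
    using act_reduced[OF assms(1,2) False one_closed, of "[]"] by auto
  moreover have "act_word (syls_word L) (\<one>, []) = act_word w (\<one>, [])"
    by (rule act_word_hnn_eq[OF assms(3)]) (simp add: NF_def)
  ultimately show ?thesis using length_act_word[of w "(\<one>, [])"] by simp
qed simp

lemma conj_pow_transfer:
  assumes "word_pow w k @ x \<asymp> x @ [Inl y]" and "w \<asymp> U @ w' @ word_inv G U" and "U \<in> hnn_words G"
  shows "word_pow w' k @ (word_inv G U @ x) \<asymp> (word_inv G U @ x) @ [Inl y]"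
proof -
  have "word_pow w k \<asymp> U @ word_pow w' k @ word_inv G U"
    using hnn_rel_word_pow_conj[OF _ _ assms(2)] hnn_eq_word_inv[OF assms(3)] by blast
  from hnn_rel_append[OF this hnn_rel.refl[of G a b x]]
  have "word_pow w k @ x \<asymp> U @ (word_pow w' k @ word_inv G U @ x)" by simp
  then have peeled: "word_inv G U @ (word_pow w k @ x) \<asymp> word_pow w' k @ word_inv G U @ x"
    by (rule hnn_eq_cancel_left[OF conjunct2[OF hnn_eq_word_inv[OF assms(3)]]])
  have "word_inv G U @ (word_pow w k @ x) \<asymp> (word_inv G U @ x) @ [Inl y]"
    using hnn_rel.ctxt[OF assms(1), of "word_inv G U" "[]"] by simp
  then show ?thesis using hnn_rel.trans[OF hnn_rel.sym[OF peeled]] by simp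
qed

lemma conj_peel_syllable:
  assumes conj: "Inl y # form_word (g, (e, g1) # L) \<asymp> form_word (g, (e, g1) # L) @ [Inl z]"
    and g: "g \<in> carrier G" and y: "y \<in> carrier G"
  shows "[Inr (\<not> e), Inl (inv g \<otimes> y \<otimes> g), Inr e] @ form_word (g1, L) \<asymp> form_word (g1, L) @ [Inl z]"
proof -
  define U where "U = [Inl g, Inr e]"
  have U: "U \<in> hnn_words G" using g by (simp add: U_def)
  have "[Inr (\<not> e), Inl (inv g \<otimes> y \<otimes> g), Inr e] = [Inr (\<not> e)] @ [Inl (inv g \<otimes> y \<otimes> g)] @ [Inr e]"
    by simp
  also have "\<dots> \<asymp> [Inr (\<not> e)] @ [Inl (inv g \<otimes> y), Inl g] @ [Inr e]"
    using hnn_rel.sym[OF hnn_eq_merge[of "inv g \<otimes> y" g "[Inr (\<not> e)]" "[Inr e]"]] g y by simp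
  also have "\<dots> = [Inr (\<not> e)] @ [Inl (inv g \<otimes> y)] @ [Inl g, Inr e]" by simp
  also have "\<dots> \<asymp> [Inr (\<not> e)] @ [Inl (inv g), Inl y] @ [Inl g, Inr e]"
    using hnn_rel.sym[OF hnn_eq_merge[of "inv g" y "[Inr (\<not> e)]" "[Inl g, Inr e]"]] g y by simp
  finally have peel: "[Inr (\<not> e), Inl (inv g \<otimes> y \<otimes> g), Inr e] \<asymp> word_inv G U @ [Inl y] @ U"
    by (simp add: U_def)
  have "[Inr (\<not> e), Inl (inv g \<otimes> y \<otimes> g), Inr e] @ form_word (g1, L)
      \<asymp> word_inv G U @ Inl y # form_word (g, (e, g1) # L)"
    using hnn_rel_append[OF peel hnn_rel.refl] by (simp add: U_def form_word_def)
  also have "\<dots> \<asymp> form_word (g1, L) @ [Inl z]"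
  proof (rule hnn_eq_cancel_left[OF conjunct2[OF hnn_eq_word_inv[OF U]]])
    show "Inl y # form_word (g, (e, g1) # L) \<asymp> U @ form_word (g1, L) @ [Inl z]"
      using conj by (simp add: U_def form_word_def)
  qed
  finally show ?thesis .
qed

lemma conj_t_pinch:
  assumes "[Inr (\<not> e), Inl u, Inr e] @ form_word (g, L) \<asymp> form_word (g, L) @ [Inl z]"
    and "reduced ((e, g) # L)" and "syls_closed ((e, g) # L)" and "u \<in> carrier G"
  shows "pinch (\<not> e) u e"
proof (rule ccontr)
  assume "\<not> pinch (\<not> e) u e"
  then have "reduced ((\<not> e, u) # (e, g) # L)" and "syls_closed ((\<not> e, u) # (e, g) # L)"
    using assms(2-4) by simp_all
  moreover have "syls_word ((\<not> e, u) # (e, g) # L) \<asymp> form_word (g, L) @ [Inl z]"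
    using assms(1) by (simp add: form_word_def)
  ultimately have "length L + 2 \<le> t_count (form_word (g, L) @ [Inl z])"
    using reduced_t_count_le by fastforce
  then show False by simp
qed

end

locale hnn_no_proper_powers = hnn_setting +
  assumes a_not_power: "\<not> proper_power G a" and b_not_power: "\<not> proper_power G b"
begin

lemma rgen_zpow_not_power:
  assumes "m = 1 \<or> m = -1"
  shows "\<not> proper_power G (rgen e [^] (m::int))"
proof
  assume "proper_power G (rgen e [^] m)"
  then have "proper_power G (rgen e)"
    using assms proper_power_inv[of "inv (rgen e)"] by (auto simp: int_pow_neg)
  then show False using a_not_power b_not_power by (simp add: rgen_def split: if_splits)
qed

text \<open>Peeling off the first syllable of the conjugator must expose a pinch, which turns the
  conjugate of \<open>y\<close> into a power of \<open>a\<close> or \<open>b\<close>; not being a proper power, it is \<open>a\<^sup>\<plusminus>\<^sup>1\<close> or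
  \<open>b\<^sup>\<plusminus>\<^sup>1\<close>, and crossing \<open>t\<^sup>\<plusminus>\<^sup>1\<close> turns it into \<open>b\<^sup>\<plusminus>\<^sup>1\<close> or \<open>a\<^sup>\<plusminus>\<^sup>1\<close>, again no proper power,
  now with a shorter conjugator.\<close>

lemma conj_in_G_non_power:
  assumes "x \<in> hnn_words G" and "y \<in> carrier G" and "z \<in> carrier G"
    and "Inl y # x \<asymp> x @ [Inl z]" and "\<not> proper_power G y"
  shows "\<not> proper_power G z"
  using assms
proof (induction "t_count x" arbitrary: x y rule: less_induct)
  case less
  obtain g L where form: "x \<asymp> form_word (g, L)" "g \<in> carrier G" "syls_closed L" "reduced L"
    "length L \<le> t_count x"
    using hnn_eq_reduced_form[OF less.prems(1)] by blast
  have "Inl y # form_word (g, L) \<asymp> Inl y # x" by (rule hnn_eq_Cons[OF hnn_rel.sym[OF form(1)]])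
  also have "\<dots> \<asymp> x @ [Inl z]" by (rule less.prems(4))
  also have "\<dots> \<asymp> form_word (g, L) @ [Inl z]" by (rule hnn_rel_append[OF form(1) hnn_rel.refl])
  finally have conj: "Inl y # form_word (g, L) \<asymp> form_word (g, L) @ [Inl z]" .
  show ?case
  proof (cases L)
    case Nil
    have "act_word (Inl y # form_word (g, L)) (\<one>, []) = act_word (form_word (g, L) @ [Inl z]) (\<one>, [])"
      by (rule act_word_hnn_eq[OF conj]) (simp add: NF_def)
    then have "y \<otimes> g = g \<otimes> z"
      using Nil less.prems(2,3) form(2) by (simp add: form_word_def)
    then have "y = g \<otimes> z \<otimes> inv g"
      using less.prems(2,3) form(2) by (simp add: inv_solve_right)
    then show ?thesis using proper_power_conj[of z g] form(2) less.prems(5) by auto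
  next
    case (Cons s1 L')
    obtain e g1 where L: "L = (e, g1) # L'" using Cons by fastforce
    have g1: "g1 \<in> carrier G" and L': "syls_closed L'" using form(3) L by auto
    define u where "u = inv g \<otimes> y \<otimes> g"
    have "g \<otimes> u \<otimes> inv g = y"
      using less.prems(2) form(2) by (simp add: u_def m_assoc[symmetric]) (simp add: m_assoc)
    then have u: "u \<in> carrier G" "\<not> proper_power G u"
      using proper_power_conj[of u g] less.prems(2,5) form(2) by (auto simp: u_def)
    have conj': "[Inr (\<not> e), Inl u, Inr e] @ form_word (g1, L') \<asymp> form_word (g1, L') @ [Inl z]"
      unfolding u_def by (rule conj_peel_syllable[OF conj[unfolded L] form(2) less.prems(2)])
    then have "pinch (\<not> e) u e" using conj_t_pinch form(3,4) L u(1) by blast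
    then obtain m where m: "u = lgen e [^] (m::int)" by (auto simp: pinch_def)
    then have "m = 1 \<or> m = -1" using non_proper_power_zpow[of "lgen e" m] u by simp
    then have not_power: "\<not> proper_power G (rgen e [^] m)" by (rule rgen_zpow_not_power)
    have "[Inl (rgen e [^] m)] \<asymp> [Inr (\<not> e), Inl u, Inr e]"
      using hnn_rel.sym[OF hnn_eq_pinch[of "\<not> e" m]] m by simp
    from hnn_rel.trans[OF hnn_rel_append[OF this hnn_rel.refl] conj']
    have "Inl (rgen e [^] m) # form_word (g1, L') \<asymp> form_word (g1, L') @ [Inl z]" by simp
    moreover have "t_count (form_word (g1, L')) < t_count x" using form(5) L by simp
    ultimately show ?thesis
      using less.hyps[of "form_word (g1, L')" "rgen e [^] m"] g1 L' less.prems(3) not_power by simp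
  qed
qed

lemma G_pow_not_conj_non_power:
  assumes g: "g \<in> carrier G" and k: "2 \<le> k" and x: "x \<in> hnn_words G"
    and y: "y \<in> carrier G" "\<not> proper_power G y"
  shows "\<not> word_pow [Inl g] k @ x \<asymp> x @ [Inl y]"
proof
  assume "word_pow [Inl g] k @ x \<asymp> x @ [Inl y]"
  with hnn_rel.trans[OF hnn_rel_append[OF hnn_rel.sym[OF hnn_eq_single_pow[OF g]] hnn_rel.refl]]
  have "[Inl (g [^] k)] @ x \<asymp> x @ [Inl y]" by blast
  then have "Inl y # word_inv G x \<asymp> word_inv G x @ [Inl (g [^] k)]"
    using hnn_eq_conj_word_inv[OF x, of "[Inl (g [^] k)]" "[Inl y]"] by simp
  then have "\<not> proper_power G (g [^] k)"
    using conj_in_G_non_power[OF word_inv_hnn_words[OF x] y(1) _ _ y(2)] g by simp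
  then show False using proper_power_nat_pow[OF g k] by simp
qed

lemma power_not_conj_non_power:
  assumes "w \<in> hnn_words G" and "x \<in> hnn_words G" and "y \<in> carrier G"
    and "\<not> proper_power G y" and "2 \<le> k"
  shows "\<not> word_pow w k @ x \<asymp> x @ [Inl y]"
  using assms
proof (induction "t_count w" arbitrary: w x rule: less_induct)
  case less
  obtain g L where form: "w \<asymp> form_word (g, L)" "g \<in> carrier G" "syls_closed L" "reduced L"
    "length L \<le> t_count w"
    using hnn_eq_reduced_form[OF less.prems(1)] by blast
  show ?case
  proof
    assume "word_pow w k @ x \<asymp> x @ [Inl y]"
    then have conj: "word_pow (form_word (g, L)) k @ x \<asymp> x @ [Inl y]"
      using conj_pow_transfer[of w k x y "[]" "form_word (g, L)"] form(1) by simp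
    consider "L = []" | "L \<noteq> []" "cyc_reduced (g, L)" | "L \<noteq> []" "\<not> cyc_reduced (g, L)"
      by blast
    then show False
    proof cases
      case 1
      then show False
        using G_pow_not_conj_non_power[OF form(2) less.prems(5,2,3,4)] conj by (simp add: form_word_def)
    next
      case 2
      then show False
        using cyc_reduced_not_conj_G[OF form(4,3) 2(1) form(2) 2(2) _ less.prems(2,3)] conj less.prems(5)
        by simp
    next
      case 3
      then obtain U w' where U: "U \<in> hnn_words G" "w' \<in> hnn_words G" "t_count w' < length L"
        "form_word (g, L) \<asymp> U @ w' @ word_inv G U"
        using not_cyc_reduced_conj[OF form(4,3) _ form(2)] by blast
      have "word_pow w' k @ (word_inv G U @ x) \<asymp> (word_inv G U @ x) @ [Inl y]"
        by (rule conj_pow_transfer[OF conj U(4) U(1)])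
      moreover have "t_count w' < t_count w" using U(3) form(5) by simp
      ultimately show False
        using less.hyps[of w' "word_inv G U @ x"] U(1,2) word_inv_hnn_words less.prems(2-5) by simp
    qed
  qed
qed

end

lemma hnn_class_eq_iff: "hnn_class G a b u = hnn_class G a b v \<longleftrightarrow> hnn_rel G a b u v"
proof
  assume "hnn_class G a b u = hnn_class G a b v"
  then show "hnn_rel G a b u v" using hnn_rel.refl[of G a b v] by (auto simp: hnn_class_def)
next
  assume uv: "hnn_rel G a b u v"
  have "hnn_rel G a b u w \<longleftrightarrow> hnn_rel G a b v w" for w
    using hnn_rel.trans[OF uv] hnn_rel.trans[OF hnn_rel.sym[OF uv]] by blast
  then show "hnn_class G a b u = hnn_class G a b v" by (simp add: hnn_class_def)
qed

lemma hnn_class_mult: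
  "hnn_class G a b u \<otimes>\<^bsub>hnn_ext G a b\<^esub> hnn_class G a b v = hnn_class G a b (u @ v)"
  unfolding hnn_ext_def hnn_class_def
  by (auto intro: hnn_rel.trans[OF hnn_rel_append])

lemma hnn_class_pow:
  "hnn_class G a b w [^]\<^bsub>hnn_ext G a b\<^esub> (n::nat) = hnn_class G a b (word_pow w n)"
proof (induction n)
  case 0 then show ?case by (simp add: hnn_ext_def)
next
  case (Suc n) then show ?case by (simp add: hnn_class_mult word_pow_Suc_right)
qed

theorem lemma3p14:
  fixes G :: "('g, 'm) monoid_scheme" and a b g0 :: 'g
  assumes "group G"
    and "a \<in> carrier G" and "b \<in> carrier G"
    and "group.ord G a = 0" and "group.ord G b = 0"
    and "\<not> proper_power G a" and "\<not> proper_power G b"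
    and "g0 \<in> carrier G"
    and "\<not> proper_power G g0"
  shows "\<not> proper_power (hnn_ext G a b) (hnn_inc G a b g0)"
proof
  interpret hnn_no_proper_powers G a b
    using assms by (simp add: hnn_no_proper_powers_def hnn_no_proper_powers_axioms_def
        hnn_setting_def hnn_setting_axioms_def)
  assume "proper_power (hnn_ext G a b) (hnn_inc G a b g0)"
  then obtain h k where h: "h \<in> carrier (hnn_ext G a b)" and k: "(k::int) \<ge> 2"
    and pow: "hnn_inc G a b g0 = h [^]\<^bsub>hnn_ext G a b\<^esub> k"
    by (auto simp: proper_power_def)
  obtain w where w: "w \<in> hnn_words G" "h = hnn_class G a b w" using h by (auto simp: hnn_ext_def)
  have "hnn_class G a b [Inl g0] = hnn_class G a b (word_pow w (nat k))"
    using pow k w(2) by (simp add: hnn_inc_def hnn_class_pow flip: pow_nat)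
  then have "[Inl g0] \<asymp> word_pow w (nat k)" by (simp add: hnn_class_eq_iff)
  from hnn_rel.sym[OF this] have "word_pow w (nat k) @ [] \<asymp> [] @ [Inl g0]" by simp
  moreover have "2 \<le> nat k" using k by linarith
  ultimately show False
    using power_not_conj_non_power[OF w(1) hnn_words_Nil assms(8,9), of "nat k"] by simp
qed

end
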